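(* Let $H_1$ and $H_2$ be vertex-disjoint connected graphs, each with at least two vertices, and let $l\geqslant 2$. Let $G_1$ be the graph obtained from $H_1$, $H_2$ and a path $v_1v_2\ldots v_l$ by identifying $v_1$ with a vertex of $H_1$ and $v_l$ with a vertex of $H_2$ (the internal vertices $v_2,\ldots,v_{l-1}$ being new). Let $$G_2=G_1-\{v_lx: x\in N_{H_2}(v_l)\}+\{v_1x: x\in N_{H_2}(v_l)\}.$$ Then $\xi^{ee}(G_1)<\xi^{ee}(G_2)$.
   Context: All graphs are finite, simple and connected. For a vertex $x$ of a connected graph $G$, $\varepsilon_G(x)$ is the eccentricity of $x$ and $d_G(x)$ its degree; $N_H(v)$ is the neighbourhood of $v$ in $H$. The total reciprocal edge-eccentricity of $G$ is $\xi^{ee}(G)=\sum_{uv\in E(G)}\left(\frac{1}{\varepsilon_G(u)}+\frac{1}{\varepsilon_G(v)}\right)=\sum_{x\in V(G)}\frac{d_G(x)}{\varepsilon_G(x)}$. *)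

theory Defs
  imports Main "HOL-Library.Multiset" Complex_Main
begin

definition simple_graph :: "'a set \<Rightarrow> 'a set set \<Rightarrow> bool" where
  "simple_graph V E \<longleftrightarrow> finite V \<and>
     (\<forall>e\<in>E. \<exists>x y. x \<noteq> y \<and> x \<in> V \<and> y \<in> V \<and> e = {x, y})"

definition is_walk :: "'a set set \<Rightarrow> 'a list \<Rightarrow> bool" where
  "is_walk E xs \<longleftrightarrow> xs \<noteq> [] \<and> (\<forall>i. Suc i < length xs \<longrightarrow> {xs ! i, xs ! Suc i} \<in> E)"

definition connected_graph :: "'a set \<Rightarrow> 'a set set \<Rightarrow> bool" where
  "connected_graph V E \<longleftrightarrow> V \<noteq> {} \<and>
     (\<forall>u\<in>V. \<forall>w\<in>V. \<exists>xs. is_walk E xs \<and> hd xs = u \<and> last xs = w)"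

definition gdist :: "'a set set \<Rightarrow> 'a \<Rightarrow> 'a \<Rightarrow> nat" where
  "gdist E u w = (LEAST n. \<exists>xs. is_walk E xs \<and> hd xs = u \<and> last xs = w \<and> length xs = Suc n)"

definition ecc :: "'a set \<Rightarrow> 'a set set \<Rightarrow> 'a \<Rightarrow> nat" where
  "ecc V E x = Max (gdist E x ` V)"

definition nbrs :: "'a set set \<Rightarrow> 'a \<Rightarrow> 'a set" where
  "nbrs E x = {y. {x, y} \<in> E}"

definition degree :: "'a set set \<Rightarrow> 'a \<Rightarrow> nat" where
  "degree E x = card (nbrs E x)"

definition xi_ee :: "'a set \<Rightarrow> 'a set set \<Rightarrow> real" where
  "xi_ee V E = (\<Sum>x\<in>V. real (degree E x) / real (ecc V E x))"

end

theory Submission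
  imports Defs
begin

text \<open>Let \<open>depth\<^sub>1\<close> and \<open>depth\<^sub>2\<close> be the largest distances from \<open>v\<^sub>1\<close> into \<open>H\<^sub>1\<close> and from
  \<open>v\<^sub>l\<close> into \<open>H\<^sub>2\<close>. The map fixing \<open>H\<^sub>1\<close> and \<open>H\<^sub>2 - v\<^sub>l\<close> and contracting the path onto \<open>v\<^sub>1\<close>
  does not increase distances from \<open>G\<^sub>1\<close> to \<open>G\<^sub>2\<close>, so no vertex off the path becomes more
  eccentric. On the path, potentials that grow by at most one along each edge show that \<open>v\<^sub>i\<close>
  has eccentricity at least \<open>max (i - 1 + depth\<^sub>1) (l - i + depth\<^sub>2)\<close> in \<open>G\<^sub>1\<close>, while in \<open>G\<^sub>2\<close>
  it is at most \<open>max (i - 1 + max depth\<^sub>1 depth\<^sub>2) (l - i)\<close>, and the now pendant \<open>v\<^sub>l\<close> is strictly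
  more eccentric than \<open>v\<^sub>1\<close>. Degrees change only at the ends: \<open>v\<^sub>1\<close> gains the \<open>d\<close> neighbours of
  \<open>v\<^sub>l\<close> in \<open>H\<^sub>2\<close> and \<open>v\<^sub>l\<close> drops from \<open>d + 1\<close> to \<open>1\<close>. Matching the summands of the two sums, along the path
  identically if \<open>depth\<^sub>2 \<le> depth\<^sub>1\<close> and in reverse order otherwise, no summand decreases and
  the two end summands together increase strictly.\<close>

section \<open>Walks and distances\<close>

lemma is_walk_singleton [simp]: "is_walk E [x]"
  by (simp add: is_walk_def)

lemma is_walk_Cons_Cons [simp]:
  "is_walk E (x # y # zs) \<longleftrightarrow> {x, y} \<in> E \<and> is_walk E (y # zs)"
  by (auto simp: is_walk_def less_Suc_eq_0_disj)

lemma is_walk_nonempty: "is_walk E xs \<Longrightarrow> xs \<noteq> []"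
  by (simp add: is_walk_def)

lemma is_walk_mono: "is_walk E xs \<Longrightarrow> E \<subseteq> F \<Longrightarrow> is_walk F xs"
  unfolding is_walk_def by blast

lemma is_walk_append_tl:
  "is_walk E xs \<Longrightarrow> is_walk E ys \<Longrightarrow> last xs = hd ys \<Longrightarrow> is_walk E (xs @ tl ys)"
proof (induction xs rule: induct_list012)
  case (2 x)
  then show ?case by (cases ys) (auto simp: is_walk_def)
next
  case (3 x y zs)
  then show ?case by simp
qed (simp add: is_walk_def)

lemma is_walk_rev: "is_walk E xs \<Longrightarrow> is_walk E (rev xs)"
proof (induction xs rule: induct_list012)
  case (3 x y zs)
  have "is_walk E (rev (y # zs) @ tl [y, x])"
    using 3 by (intro is_walk_append_tl) (auto simp: insert_commute last_rev)
  then show ?case by simp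
qed (auto simp: is_walk_def)

definition reachable :: "'a set set \<Rightarrow> 'a \<Rightarrow> 'a \<Rightarrow> bool" where
  "reachable E u w \<longleftrightarrow> (\<exists>xs. is_walk E xs \<and> hd xs = u \<and> last xs = w)"

lemma reachable_refl [simp]: "reachable E u u"
  unfolding reachable_def by (rule exI[of _ "[u]"]) simp

lemma reachable_edge: "{u, w} \<in> E \<Longrightarrow> reachable E u w"
  unfolding reachable_def by (rule exI[of _ "[u, w]"]) simp

lemma reachable_trans: "reachable E u m \<Longrightarrow> reachable E m w \<Longrightarrow> reachable E u w"
  unfolding reachable_def
  by (metis is_walk_append_tl is_walk_nonempty hd_append list.collapse last_appendR last_tl last_ConsL)

lemma reachable_mono: "reachable E u w \<Longrightarrow> E \<subseteq> F \<Longrightarrow> reachable F u w"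
  unfolding reachable_def using is_walk_mono by blast

lemma reachable_sym: "reachable E u w \<Longrightarrow> reachable E w u"
  unfolding reachable_def by (metis hd_rev is_walk_rev last_rev)

lemma connected_graph_reachable:
  "connected_graph V E \<Longrightarrow> u \<in> V \<Longrightarrow> w \<in> V \<Longrightarrow> reachable E u w"
  unfolding connected_graph_def reachable_def by blast

lemma gdist_le_length:
  assumes "is_walk E xs" "hd xs = u" "last xs = w"
  shows "gdist E u w \<le> length xs - 1"
proof -
  have "length xs = Suc (length xs - 1)"
    using is_walk_nonempty[OF assms(1)] by (cases xs) auto
  then show ?thesis
    unfolding gdist_def using assms by (intro Least_le) metis
qed

lemma shortest_walk:
  assumes "reachable E u w"
  obtains xs where "is_walk E xs" "hd xs = u" "last xs = w" "length xs = Suc (gdist E u w)"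
proof -
  obtain xs where xs: "is_walk E xs" "hd xs = u" "last xs = w"
    using assms unfolding reachable_def by blast
  have "length xs = Suc (length xs - 1)"
    using is_walk_nonempty[OF xs(1)] by (cases xs) auto
  with xs have "\<exists>n xs. is_walk E xs \<and> hd xs = u \<and> last xs = w \<and> length xs = Suc n"
    by metis
  then have "\<exists>xs. is_walk E xs \<and> hd xs = u \<and> last xs = w \<and> length xs = Suc (gdist E u w)"
    unfolding gdist_def by (rule LeastI_ex)
  then show ?thesis
    using that by blast
qed

lemma gdist_self [simp]: "gdist E u u = 0"
  using gdist_le_length[of E "[u]" u u] by simp

lemma gdist_edge_le_1: "{u, w} \<in> E \<Longrightarrow> gdist E u w \<le> 1"
  using gdist_le_length[of E "[u, w]" u w] by simp

lemma gdist_triangle: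
  assumes "reachable E u m" "reachable E m w"
  shows "gdist E u w \<le> gdist E u m + gdist E m w"
proof -
  obtain xs where xs: "is_walk E xs" "hd xs = u" "last xs = m" "length xs = Suc (gdist E u m)"
    using shortest_walk[OF assms(1)] by blast
  obtain ys where ys: "is_walk E ys" "hd ys = m" "last ys = w" "length ys = Suc (gdist E m w)"
    using shortest_walk[OF assms(2)] by blast
  have "gdist E u w \<le> length (xs @ tl ys) - 1"
  proof (rule gdist_le_length)
    show "is_walk E (xs @ tl ys)" using xs ys by (intro is_walk_append_tl) auto
    show "hd (xs @ tl ys) = u" using xs is_walk_nonempty by (cases xs) auto
    show "last (xs @ tl ys) = w" using xs ys is_walk_nonempty by (cases ys) auto
  qed
  also have "\<dots> = gdist E u m + gdist E m w"
    using xs ys by simp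
  finally show ?thesis .
qed

lemma gdist_sym: "reachable E u w \<Longrightarrow> gdist E u w = gdist E w u"
proof -
  have le: "gdist E w u \<le> gdist E u w" if r: "reachable E u w" for u w
  proof -
    obtain xs where xs: "is_walk E xs" "hd xs = u" "last xs = w" "length xs = Suc (gdist E u w)"
      using shortest_walk[OF r] by blast
    have "gdist E w u \<le> length (rev xs) - 1"
      using xs is_walk_nonempty[OF xs(1)]
      by (intro gdist_le_length is_walk_rev) (auto simp: hd_rev last_rev)
    with xs show ?thesis by simp
  qed
  assume "reachable E u w"
  with le[of u w] le[of w u] reachable_sym show ?thesis by fastforce
qed

lemma gdist_eq_0_imp_eq: "reachable E u w \<Longrightarrow> gdist E u w = 0 \<Longrightarrow> u = w"
  by (metis shortest_walk is_walk_nonempty hd_conv_nth last_conv_nth One_nat_def diff_Suc_1)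

lemma walk_image:
  assumes "is_walk E xs"
    and edges: "\<And>u w. {u, w} \<in> E \<Longrightarrow> g u = g w \<or> {g u, g w} \<in> F"
  shows "\<exists>ys. is_walk F ys \<and> hd ys = g (hd xs) \<and> last ys = g (last xs) \<and> length ys \<le> length xs"
  using assms(1)
proof (induction xs rule: induct_list012)
  case 1
  then show ?case by (simp add: is_walk_def)
next
  case (2 x)
  show ?case by (rule exI[of _ "[g x]"]) simp
next
  case (3 x y zs)
  then obtain ys where ys: "is_walk F ys" "hd ys = g y" "last ys = g (last (y # zs))"
    "length ys \<le> length (y # zs)"
    by auto
  show ?case
  proof (cases "g x = g y")
    case True
    with ys show ?thesis by (intro exI[of _ ys]) auto
  next
    case False
    with 3 edges have "{g x, g y} \<in> F" by auto
    with ys is_walk_nonempty[OF ys(1)] show ?thesis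
      by (intro exI[of _ "g x # ys"]) (cases ys, auto)
  qed
qed

lemma reachable_image:
  assumes "reachable E u w"
    and "\<And>u w. {u, w} \<in> E \<Longrightarrow> g u = g w \<or> {g u, g w} \<in> F"
  shows "reachable F (g u) (g w)"
  using assms walk_image unfolding reachable_def by metis

lemma gdist_image_le:
  assumes "reachable E u w"
    and "\<And>u w. {u, w} \<in> E \<Longrightarrow> g u = g w \<or> {g u, g w} \<in> F"
  shows "gdist F (g u) (g w) \<le> gdist E u w"
proof -
  obtain xs where xs: "is_walk E xs" "hd xs = u" "last xs = w" "length xs = Suc (gdist E u w)"
    using shortest_walk[OF assms(1)] by blast
  then obtain ys where "is_walk F ys" "hd ys = g u" "last ys = g w" "length ys \<le> length xs"
    using walk_image[where g = g and F = F, OF xs(1) assms(2)] by blast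
  with xs show ?thesis
    using gdist_le_length[of F ys "g u" "g w"] by simp
qed

lemma walk_lipschitz:
  fixes f :: "'a \<Rightarrow> int"
  assumes "is_walk E xs" and "\<And>u w. {u, w} \<in> E \<Longrightarrow> \<bar>f u - f w\<bar> \<le> 1"
  shows "\<bar>f (hd xs) - f (last xs)\<bar> \<le> int (length xs - 1)"
  using assms(1)
proof (induction xs rule: induct_list012)
  case (3 x y zs)
  then have "\<bar>f x - f y\<bar> \<le> 1" "\<bar>f y - f (last (y # zs))\<bar> \<le> int (length zs)"
    using assms(2) by auto
  then show ?case by simp
qed (simp_all add: is_walk_def)

lemma lipschitz_le_gdist:
  fixes f :: "'a \<Rightarrow> int"
  assumes "reachable E u w" and "\<And>u w. {u, w} \<in> E \<Longrightarrow> \<bar>f u - f w\<bar> \<le> 1"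
  shows "\<bar>f u - f w\<bar> \<le> int (gdist E u w)"
proof -
  obtain xs where xs: "is_walk E xs" "hd xs = u" "last xs = w" "length xs = Suc (gdist E u w)"
    using shortest_walk[OF assms(1)] by blast
  with walk_lipschitz[OF xs(1) assms(2)] show ?thesis by simp
qed

lemma gdist_le_ecc: "finite V \<Longrightarrow> z \<in> V \<Longrightarrow> gdist E x z \<le> ecc V E x"
  unfolding ecc_def by simp

lemma ecc_attained: "finite V \<Longrightarrow> V \<noteq> {} \<Longrightarrow> \<exists>z\<in>V. ecc V E x = gdist E x z"
  unfolding ecc_def by (metis Max_in finite_imageI image_iff image_is_empty)

lemma ecc_pos:
  assumes "finite V" "x \<in> V" "z \<in> V" "z \<noteq> x" "reachable E x z"
  shows "0 < ecc V E x"
proof -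
  have "gdist E x z \<noteq> 0"
    using gdist_eq_0_imp_eq[OF assms(5)] assms(4) by blast
  with gdist_le_ecc[OF assms(1,3), of E x] show ?thesis by linarith
qed

lemma simple_graph_edge:
  "simple_graph V E \<Longrightarrow> {u, w} \<in> E \<Longrightarrow> u \<in> V \<and> w \<in> V \<and> u \<noteq> w"
  unfolding simple_graph_def by (metis doubleton_eq_iff)

lemma exists_other_elem: "2 \<le> card A \<Longrightarrow> \<exists>z\<in>A. z \<noteq> x"
  by (metis card.infinite card_le_Suc0_iff_eq not_less_eq_eq numeral_2_eq_2 zero_le)

lemma connected_graph_has_edge:
  assumes "connected_graph V E" "2 \<le> card V" "x \<in> V"
  shows "\<exists>y. {x, y} \<in> E"
proof -
  obtain z where "z \<in> V" "z \<noteq> x"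
    using exists_other_elem[OF assms(2)] by blast
  then obtain xs where xs: "is_walk E xs" "hd xs = x" "last xs = z"
    using assms(1,3) unfolding connected_graph_def by blast
  with \<open>z \<noteq> x\<close> obtain y ys where "xs = x # y # ys"
    by (metis is_walk_nonempty last_ConsL list.collapse)
  with xs(1) show ?thesis by auto
qed

lemma sum_less_sum_bij_betw:
  fixes f g :: "'a \<Rightarrow> real"
  assumes "finite V" "p \<in> V" "q \<in> V" "p \<noteq> q" "bij_betw \<sigma> V V"
    and le: "\<And>x. x \<in> V - {p, q} \<Longrightarrow> f (\<sigma> x) \<le> g x"
    and lt: "f (\<sigma> p) + f (\<sigma> q) < g p + g q"
  shows "sum f V < sum g V"
proof -
  have split: "sum h V = h p + h q + sum h (V - {p, q})" for h :: "'a \<Rightarrow> real"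
    using sum.subset_diff[of "{p, q}" V h] assms(1-4) by simp
  have "sum f V = sum (f \<circ> \<sigma>) V"
    using sum.reindex_bij_betw[OF assms(5), of f] by simp
  also have "\<dots> < sum g V"
    unfolding split[of "f \<circ> \<sigma>"] split[of g] using lt sum_mono[of _ "f \<circ> \<sigma>" g] le
    by (smt (verit) comp_apply)
  finally show ?thesis .
qed

text \<open>At the ends of the path the degrees change from \<open>D\<close>, \<open>d + 1\<close> to \<open>D + d\<close>, \<open>1\<close>; the two
  inequalities below serve the matchings \<open>v 1 \<mapsto> v 1\<close> and \<open>v 1 \<mapsto> v l\<close> of these terms.\<close>

lemma ratio_sum_less_aligned:
  fixes D d A1 B1 A2 B2 :: real
  assumes "0 < A2" "A2 < B2" "A2 \<le> A1" "B2 \<le> B1" "1 \<le> d" "0 \<le> D"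
  shows "D / A1 + (d + 1) / B1 < (D + d) / A2 + 1 / B2"
proof -
  have "D / A1 \<le> D / A2" "(d + 1) / B1 \<le> (d + 1) / B2" "d / B2 < d / A2"
    using assms by (auto intro: divide_left_mono divide_strict_left_mono)
  then show ?thesis by (simp add: add_divide_distrib)
qed

lemma ratio_sum_less_crossed:
  fixes D d A1 B1 A2 B2 :: real
  assumes "0 < A2" "A2 < B2" "A2 \<le> B1" "B2 \<le> A1" "0 \<le> d" "2 \<le> D"
  shows "(d + 1) / B1 + D / A1 < (D + d) / A2 + 1 / B2"
proof -
  have "D / A1 \<le> D / B2" "(d + 1) / B1 \<le> (d + 1) / A2" "(D - 1) / B2 < (D - 1) / A2"
    using assms by (auto intro: divide_left_mono divide_strict_left_mono)
  moreover have "D / B2 = (D - 1) / B2 + 1 / B2" "(D + d) / A2 = (D - 1) / A2 + (d + 1) / A2"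
    by (simp_all add: diff_divide_distrib add_divide_distrib)
  ultimately show ?thesis by linarith
qed

section \<open>The graphs \<open>G\<^sub>1\<close> and \<open>G\<^sub>2\<close>\<close>

locale path_joined_graphs =
  fixes V1 V2 :: "'a set" and E1 E2 :: "'a set set" and v :: "nat \<Rightarrow> 'a" and l :: nat
  assumes simple1: "simple_graph V1 E1" and connected1: "connected_graph V1 E1"
    and card1: "2 \<le> card V1"
    and simple2: "simple_graph V2 E2" and connected2: "connected_graph V2 E2"
    and card2: "2 \<le> card V2"
    and disjoint: "V1 \<inter> V2 = {}"
    and l_ge_2: "2 \<le> l"
    and v1_in_V1: "v 1 \<in> V1" and vl_in_V2: "v l \<in> V2"
    and inj_path: "inj_on v {1..l}"
    and interior_new: "\<forall>i\<in>{2..<l}. v i \<notin> V1 \<union> V2"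
begin

definition "VG = V1 \<union> V2 \<union> v ` {1..l}"
definition "EP = {{v i, v (Suc i)} | i. 1 \<le> i \<and> i < l}"
definition "EG1 = E1 \<union> E2 \<union> EP"
definition "N = nbrs E2 (v l)"
definition "EG2 = (EG1 - {{v l, x} | x. x \<in> N}) \<union> {{v 1, x} | x. x \<in> N}"

lemma finite_V1: "finite V1"
  using simple1 simple_graph_def by blast

lemma finite_V2: "finite V2"
  using simple2 simple_graph_def by blast

lemma finite_VG: "finite VG"
  unfolding VG_def using finite_V1 finite_V2 by simp

lemma E1_edge: "{u, w} \<in> E1 \<Longrightarrow> u \<in> V1 \<and> w \<in> V1 \<and> u \<noteq> w"
  using simple_graph_edge[OF simple1] .

lemma E2_edge: "{u, w} \<in> E2 \<Longrightarrow> u \<in> V2 \<and> w \<in> V2 \<and> u \<noteq> w"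
  using simple_graph_edge[OF simple2] .

lemma path_eq_iff: "i \<in> {1..l} \<Longrightarrow> j \<in> {1..l} \<Longrightarrow> v i = v j \<longleftrightarrow> i = j"
  using inj_path by (meson inj_on_eq_iff)

lemma path_in_V1_iff: "i \<in> {1..l} \<Longrightarrow> v i \<in> V1 \<longleftrightarrow> i = 1"
  using v1_in_V1 vl_in_V2 disjoint interior_new by (cases "i = l") force+

lemma path_in_V2_iff: "i \<in> {1..l} \<Longrightarrow> v i \<in> V2 \<longleftrightarrow> i = l"
  using v1_in_V1 vl_in_V2 disjoint interior_new by (cases "i = 1") force+

lemma v1_neq_vl: "v 1 \<noteq> v l"
  using v1_in_V1 vl_in_V2 disjoint by auto

lemma path_VG: "i \<in> {1..l} \<Longrightarrow> v i \<in> VG"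
  unfolding VG_def by simp

lemma V1_VG: "x \<in> V1 \<Longrightarrow> x \<in> VG"
  unfolding VG_def by simp

lemma V2_VG: "x \<in> V2 \<Longrightarrow> x \<in> VG"
  unfolding VG_def by simp

lemma VG_cases:
  assumes "z \<in> VG"
  obtains "z \<in> V1" | "z \<in> V2" "z \<noteq> v l" | i where "i \<in> {1..l}" "z = v i"
proof -
  consider "z \<in> V1" | "z \<in> V2" | "z \<in> v ` {1..l}"
    using assms unfolding VG_def by blast
  then show thesis
  proof cases
    case 2
    show thesis
    proof (cases "z = v l")
      case True
      with that(3)[of l] l_ge_2 show thesis by simp
    qed (use 2 that(2) in blast)
  qed (use that in blast)+
qed

lemma path_edge_EP: "1 \<le> i \<Longrightarrow> i < l \<Longrightarrow> {v i, v (Suc i)} \<in> EP"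
  unfolding EP_def by (auto intro!: exI[of _ i])

lemma EP_edgeE:
  assumes "{u, w} \<in> EP"
  obtains i where "1 \<le> i" "i < l" "u = v i \<and> w = v (Suc i) \<or> u = v (Suc i) \<and> w = v i"
  using assms that unfolding EP_def by (auto simp: doubleton_eq_iff)

lemma N_iff: "y \<in> N \<longleftrightarrow> {v l, y} \<in> E2"
  unfolding N_def nbrs_def by simp

lemma N_V2: "y \<in> N \<Longrightarrow> y \<in> V2 \<and> y \<noteq> v l"
  using N_iff E2_edge by blast

lemma finite_N: "finite N"
  using N_V2 finite_V2 by (meson finite_subset subsetI)

lemma N_nonempty: "N \<noteq> {}"
  using connected_graph_has_edge[OF connected2 card2 vl_in_V2] N_iff by blast

lemma EG2_iff:
  "{u, w} \<in> EG2 \<longleftrightarrow>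
     {u, w} \<in> EG1 \<and> \<not> (u = v l \<and> w \<in> N \<or> w = v l \<and> u \<in> N) \<or> u = v 1 \<and> w \<in> N \<or> w = v 1 \<and> u \<in> N"
  unfolding EG2_def by (auto simp: doubleton_eq_iff)

lemma EP_subset_EG1: "EP \<subseteq> EG1"
  unfolding EG1_def by blast

lemma EP_subset_EG2: "EP \<subseteq> EG2"
proof
  fix e assume "e \<in> EP"
  then obtain i where i: "1 \<le> i" "i < l" "e = {v i, v (Suc i)}"
    unfolding EP_def by blast
  have "v i \<noteq> v l" "v i \<notin> N"
    using i path_eq_iff[of i l] path_in_V2_iff[of i] N_V2 by auto
  with i show "e \<in> EG2"
    using \<open>e \<in> EP\<close> EP_subset_EG1 by (auto simp: EG2_iff)
qed

lemma path_gdist_le: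
  assumes "EP \<subseteq> E" "1 \<le> i" "i \<le> j" "j \<le> l"
  shows "reachable E (v i) (v j) \<and> gdist E (v i) (v j) \<le> j - i"
  using assms(3,4)
proof (induction j)
  case 0
  then show ?case using assms(2) by simp
next
  case (Suc j)
  show ?case
  proof (cases "i = Suc j")
    case True
    then show ?thesis by simp
  next
    case False
    with Suc.prems have ij: "i \<le> j" "j < l" by auto
    with Suc.IH have IH: "reachable E (v i) (v j)" "gdist E (v i) (v j) \<le> j - i"
      by simp_all
    have e: "{v j, v (Suc j)} \<in> E"
      using path_edge_EP assms(1,2) ij by auto
    have "gdist E (v i) (v (Suc j)) \<le> gdist E (v i) (v j) + gdist E (v j) (v (Suc j))"
      using gdist_triangle[OF IH(1) reachable_edge[OF e]] .
    also have "\<dots> \<le> Suc j - i"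
      using IH(2) gdist_edge_le_1[OF e] ij by linarith
    finally show ?thesis
      using reachable_trans[OF IH(1) reachable_edge[OF e]] by blast
  qed
qed

lemma path_reachable_v1: "EP \<subseteq> E \<Longrightarrow> i \<in> {1..l} \<Longrightarrow> reachable E (v i) (v 1)"
  using path_gdist_le[of E 1 i] reachable_sym by fastforce

lemma EG1_VG: "{u, w} \<in> EG1 \<Longrightarrow> u \<in> VG \<and> w \<in> VG"
proof -
  assume "{u, w} \<in> EG1"
  then consider "{u, w} \<in> E1" | "{u, w} \<in> E2" | "{u, w} \<in> EP"
    unfolding EG1_def by blast
  then show ?thesis
  proof cases
    case 3
    then obtain i where "1 \<le> i" "i < l" "u = v i \<and> w = v (Suc i) \<or> u = v (Suc i) \<and> w = v i"
      by (rule EP_edgeE)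
    then show ?thesis using path_VG by auto
  qed (auto dest: E1_edge E2_edge intro: V1_VG V2_VG)
qed

lemma reachable_G1_v1: "x \<in> VG \<Longrightarrow> reachable EG1 x (v 1)"
proof -
  have sub: "E1 \<subseteq> EG1" "E2 \<subseteq> EG1"
    unfolding EG1_def by auto
  assume "x \<in> VG"
  then show ?thesis
  proof (cases rule: VG_cases)
    case 1
    show ?thesis
      by (rule reachable_mono[OF connected_graph_reachable[OF connected1 1 v1_in_V1] sub(1)])
  next
    case 2
    have "reachable EG1 x (v l)"
      by (rule reachable_mono[OF connected_graph_reachable[OF connected2 2(1) vl_in_V2] sub(2)])
    moreover have "reachable EG1 (v l) (v 1)"
      using path_reachable_v1[OF EP_subset_EG1] l_ge_2 by simp
    ultimately show ?thesis by (rule reachable_trans)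
  next
    case 3
    then show ?thesis using path_reachable_v1[OF EP_subset_EG1] by simp
  qed
qed

lemma reachable_G1: "u \<in> VG \<Longrightarrow> w \<in> VG \<Longrightarrow> reachable EG1 u w"
  using reachable_G1_v1 reachable_trans reachable_sym by metis

text \<open>Contracting the whole path, \<open>v l\<close> included, onto \<open>v 1\<close> sends every edge of \<open>G\<^sub>1\<close> to an
  edge of \<open>G\<^sub>2\<close> or to a single vertex, so distances between vertices off the path do not grow.\<close>

definition "collapse w = (if w \<in> V1 \<or> w \<in> V2 \<and> w \<noteq> v l then w else v 1)"

lemma collapse_id: "x \<in> V1 \<or> x \<in> V2 \<and> x \<noteq> v l \<Longrightarrow> collapse x = x"
  unfolding collapse_def by simp

lemma collapse_path: "i \<in> {1..l} \<Longrightarrow> collapse (v i) = v 1"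
  unfolding collapse_def using path_in_V1_iff path_in_V2_iff by auto

lemma collapse_vl: "collapse (v l) = v 1"
  using collapse_path l_ge_2 by simp

lemma collapse_v1: "collapse (v 1) = v 1"
  using collapse_id v1_in_V1 by simp

lemma collapse_edge:
  assumes e: "{u, w} \<in> EG1"
  shows "collapse u = collapse w \<or> {collapse u, collapse w} \<in> EG2"
proof -
  consider "{u, w} \<in> E1" | "{u, w} \<in> E2" | "{u, w} \<in> EP"
    using e unfolding EG1_def by blast
  then show ?thesis
  proof cases
    case 1
    then have "u \<in> V1" "w \<in> V1" using E1_edge by auto
    moreover have "u \<noteq> v l" "w \<noteq> v l"
      using calculation vl_in_V2 disjoint by auto
    ultimately show ?thesis using e by (simp add: collapse_id EG2_iff)
  next
    case 2
    then have uw: "u \<in> V2" "w \<in> V2" "u \<noteq> w" using E2_edge by auto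
    consider "u = v l" | "w = v l" | "u \<noteq> v l" "w \<noteq> v l" by blast
    then show ?thesis
    proof cases
      case 1
      with 2 uw show ?thesis by (simp add: N_iff EG2_iff collapse_vl collapse_id)
    next
      case 2
      with \<open>{u, w} \<in> E2\<close> uw show ?thesis
        by (simp add: N_iff EG2_iff collapse_vl collapse_id insert_commute)
    next
      case 3
      with e uw show ?thesis by (simp add: EG2_iff collapse_id)
    qed
  next
    case 3
    then obtain i where "1 \<le> i" "i < l" "u = v i \<and> w = v (Suc i) \<or> u = v (Suc i) \<and> w = v i"
      by (rule EP_edgeE)
    then show ?thesis using collapse_path by auto
  qed
qed

lemma reachable_G2_v1:
  assumes x: "x \<in> VG"
  shows "reachable EG2 x (v 1)"
proof -
  have "reachable EG2 (collapse x) (collapse (v 1))"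
    by (rule reachable_image[where g = collapse and F = EG2,
          OF reachable_G1[OF x V1_VG[OF v1_in_V1]] collapse_edge])
  then have img: "reachable EG2 (collapse x) (v 1)"
    by (simp only: collapse_v1)
  from x show ?thesis
  proof (cases rule: VG_cases)
    case 3
    then show ?thesis using path_reachable_v1[OF EP_subset_EG2] by simp
  qed (use img collapse_id in simp_all)
qed

lemma reachable_G2: "u \<in> VG \<Longrightarrow> w \<in> VG \<Longrightarrow> reachable EG2 u w"
  using reachable_G2_v1 reachable_trans reachable_sym by metis

lemma gdist_collapse_le:
  "u \<in> VG \<Longrightarrow> w \<in> VG \<Longrightarrow> gdist EG2 (collapse u) (collapse w) \<le> gdist EG1 u w"
  using gdist_image_le[where g = collapse and F = EG2, OF reachable_G1 collapse_edge] .

definition "path_index w = inv_into {1..l} v w"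

lemma path_index_v: "i \<in> {1..l} \<Longrightarrow> path_index (v i) = i"
  unfolding path_index_def using inj_path by simp

lemma path_gdist_G2:
  assumes "i \<in> {1..l}" "j \<in> {1..l}"
  shows "gdist EG2 (v i) (v j) \<le> (if i \<le> j then j - i else i - j)"
proof (cases "i \<le> j")
  case True
  then show ?thesis using path_gdist_le[OF EP_subset_EG2, of i j] assms by auto
next
  case False
  then have "reachable EG2 (v j) (v i)" "gdist EG2 (v j) (v i) \<le> i - j"
    using path_gdist_le[OF EP_subset_EG2, of j i] assms by auto
  with False show ?thesis by (simp add: gdist_sym)
qed

lemma gdist_G1_lipschitz:
  assumes "x \<in> VG" "{u, w} \<in> EG1"
  shows "\<bar>int (gdist EG1 x u) - int (gdist EG1 x w)\<bar> \<le> 1"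
proof -
  have uw: "u \<in> VG" "w \<in> VG" using EG1_VG[OF assms(2)] by auto
  have "gdist EG1 x w \<le> gdist EG1 x u + gdist EG1 u w"
    using gdist_triangle[OF reachable_G1[OF assms(1) uw(1)] reachable_G1[OF uw]] .
  moreover have "gdist EG1 x u \<le> gdist EG1 x w + gdist EG1 w u"
    using gdist_triangle[OF reachable_G1[OF assms(1) uw(2)] reachable_G1[OF uw(2,1)]] .
  moreover have "gdist EG1 u w \<le> 1" "gdist EG1 w u \<le> 1"
    using gdist_edge_le_1[of u w EG1] gdist_edge_le_1[of w u EG1] assms(2)
    by (simp_all add: insert_commute)
  ultimately show ?thesis by linarith
qed

text \<open>The lower bounds below come from 1-Lipschitz potentials: a vertex of \<open>H\<^sub>1\<close> or \<open>H\<^sub>2\<close>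
  can only reach the path through its end in that graph.\<close>

lemma gdist_V1_path:
  assumes x: "x \<in> V1" and i: "i \<in> {1..l}"
  shows "gdist EG1 x (v 1) + i - 1 \<le> gdist EG1 x (v i)"
proof -
  define c where "c = int (gdist EG1 x (v 1))"
  define f where "f w = (if w \<in> V1 then int (gdist EG1 x w) else if w \<in> V2 then c + int l - 1
     else c + int (path_index w) - 1)" for w
  have f_path: "f (v j) = c + int j - 1" if j: "j \<in> {1..l}" for j
    using j v1_in_V1 path_in_V1_iff[OF j] path_in_V2_iff[OF j] path_index_v[OF j]
    unfolding f_def c_def by auto
  have "\<bar>f u - f w\<bar> \<le> 1" if e: "{u, w} \<in> EG1" for u w
  proof -
    consider "{u, w} \<in> E1" | "{u, w} \<in> E2" | "{u, w} \<in> EP"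
      using e unfolding EG1_def by blast
    then show ?thesis
    proof cases
      case 1
      then have "u \<in> V1" "w \<in> V1" using E1_edge by auto
      then show ?thesis using gdist_G1_lipschitz[OF V1_VG[OF x] e] unfolding f_def by simp
    next
      case 2
      then have "u \<in> V2" "w \<in> V2" using E2_edge by auto
      then show ?thesis using disjoint unfolding f_def by auto
    next
      case 3
      then obtain k where "1 \<le> k" "k < l" "u = v k \<and> w = v (Suc k) \<or> u = v (Suc k) \<and> w = v k"
        by (rule EP_edgeE)
      then show ?thesis using f_path[of k] f_path[of "Suc k"] by auto
    qed
  qed
  then have "\<bar>f x - f (v i)\<bar> \<le> int (gdist EG1 x (v i))"
    using lipschitz_le_gdist[OF reachable_G1[OF V1_VG[OF x] path_VG[OF i]]] by blast
  moreover have "f x = 0" using x unfolding f_def by simp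
  ultimately show ?thesis using f_path[OF i] i unfolding c_def by auto
qed

lemma gdist_V2_path:
  assumes y: "y \<in> V2" and i: "i \<in> {1..l}"
  shows "gdist EG1 y (v l) + (l - i) \<le> gdist EG1 y (v i)"
proof -
  define c where "c = int (gdist EG1 y (v l))"
  define f where "f w = (if w \<in> V2 then int (gdist EG1 y w) else if w \<in> V1 then c + int l - 1
     else c + int l - int (path_index w))" for w
  have f_path: "f (v j) = c + int l - int j" if j: "j \<in> {1..l}" for j
    using j vl_in_V2 path_in_V1_iff[OF j] path_in_V2_iff[OF j] path_index_v[OF j]
    unfolding f_def c_def by auto
  have "\<bar>f u - f w\<bar> \<le> 1" if e: "{u, w} \<in> EG1" for u w
  proof -
    consider "{u, w} \<in> E1" | "{u, w} \<in> E2" | "{u, w} \<in> EP"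
      using e unfolding EG1_def by blast
    then show ?thesis
    proof cases
      case 1
      then have "u \<in> V1" "w \<in> V1" using E1_edge by auto
      then show ?thesis using disjoint unfolding f_def by auto
    next
      case 2
      then have "u \<in> V2" "w \<in> V2" using E2_edge by auto
      then show ?thesis using gdist_G1_lipschitz[OF V2_VG[OF y] e] unfolding f_def by simp
    next
      case 3
      then obtain k where "1 \<le> k" "k < l" "u = v k \<and> w = v (Suc k) \<or> u = v (Suc k) \<and> w = v k"
        by (rule EP_edgeE)
      then show ?thesis using f_path[of k] f_path[of "Suc k"] by auto
    qed
  qed
  then have "\<bar>f y - f (v i)\<bar> \<le> int (gdist EG1 y (v i))"
    using lipschitz_le_gdist[OF reachable_G1[OF V2_VG[OF y] path_VG[OF i]]] by blast
  moreover have "f y = 0" using y unfolding f_def by simp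
  ultimately show ?thesis using f_path[OF i] i unfolding c_def by auto
qed

definition "vl_potential w = (if w \<in> V1 then - int (gdist EG1 (v 1) w)
  else if w \<in> V2 \<and> w \<noteq> v l then - int (gdist EG1 (v l) w) else int (path_index w) - 1)"

lemma vl_potential_path: "j \<in> {1..l} \<Longrightarrow> vl_potential (v j) = int j - 1"
  using v1_in_V1 path_in_V1_iff path_in_V2_iff path_index_v
  unfolding vl_potential_def by auto

lemma vl_potential_lipschitz_G2:
  assumes e: "{u, w} \<in> EG2"
  shows "\<bar>vl_potential u - vl_potential w\<bar> \<le> 1"
proof -
  have N_edge: "\<bar>vl_potential (v 1) - vl_potential y\<bar> \<le> 1" if y: "y \<in> N" for y
  proof -
    have "y \<in> V2" "y \<noteq> v l" "y \<notin> V1" using N_V2[OF y] disjoint by auto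
    moreover have "gdist EG1 (v l) y \<le> 1"
      using y gdist_edge_le_1[of "v l" y EG1] unfolding N_iff EG1_def by blast
    ultimately show ?thesis
      using vl_potential_path[of 1] l_ge_2 unfolding vl_potential_def by simp
  qed
  consider "{u, w} \<in> EG1" "\<not> (u = v l \<and> w \<in> N \<or> w = v l \<and> u \<in> N)"
    | "u = v 1" "w \<in> N" | "w = v 1" "u \<in> N"
    using e by (auto simp: EG2_iff)
  then show ?thesis
  proof cases
    case 1
    consider "{u, w} \<in> E1" | "{u, w} \<in> E2" | "{u, w} \<in> EP"
      using 1(1) unfolding EG1_def by blast
    then show ?thesis
    proof cases
      case 1
      then have "u \<in> V1" "w \<in> V1" using E1_edge by auto
      then show ?thesis
        using gdist_G1_lipschitz[OF V1_VG[OF v1_in_V1] \<open>{u, w} \<in> EG1\<close>]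
        unfolding vl_potential_def by (simp add: abs_le_iff)
    next
      case 2
      then have "u \<in> V2" "w \<in> V2" "u \<notin> V1" "w \<notin> V1" using E2_edge disjoint by auto
      moreover have "u \<noteq> v l" "w \<noteq> v l"
        using 1(2) 2 by (auto simp: N_iff insert_commute)
      ultimately show ?thesis
        using gdist_G1_lipschitz[OF V2_VG[OF vl_in_V2] \<open>{u, w} \<in> EG1\<close>]
        unfolding vl_potential_def by (simp add: abs_le_iff)
    next
      case 3
      then obtain k where "1 \<le> k" "k < l" "u = v k \<and> w = v (Suc k) \<or> u = v (Suc k) \<and> w = v k"
        by (rule EP_edgeE)
      then show ?thesis using vl_potential_path[of k] vl_potential_path[of "Suc k"] by auto
    qed
  qed (use N_edge in \<open>auto simp: abs_minus_commute\<close>)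
qed

lemma gdist_G2_from_vl:
  assumes z: "z \<in> V1 \<or> z \<in> V2 \<and> z \<noteq> v l"
  shows "(if z \<in> V1 then gdist EG1 (v 1) z else gdist EG1 (v l) z) + (l - 1) \<le> gdist EG2 (v l) z"
proof -
  have "reachable EG2 (v l) z"
    using reachable_G2 path_VG[of l] V1_VG V2_VG z l_ge_2 by auto
  then have "\<bar>vl_potential (v l) - vl_potential z\<bar> \<le> int (gdist EG2 (v l) z)"
    using lipschitz_le_gdist[of EG2 "v l" z vl_potential] vl_potential_lipschitz_G2 by blast
  moreover have "vl_potential (v l) = int l - 1" using vl_potential_path[of l] l_ge_2 by simp
  ultimately show ?thesis using z l_ge_2 unfolding vl_potential_def by (auto split: if_splits)
qed

section \<open>Eccentricities\<close>

definition "depth1 = Max (gdist EG1 (v 1) ` V1)"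
definition "depth2 = Max (gdist EG1 (v l) ` V2)"

lemma gdist_le_depth1: "z \<in> V1 \<Longrightarrow> gdist EG1 (v 1) z \<le> depth1"
  unfolding depth1_def using finite_V1 by simp

lemma gdist_le_depth2: "z \<in> V2 \<Longrightarrow> gdist EG1 (v l) z \<le> depth2"
  unfolding depth2_def using finite_V2 by simp

lemma depth1_attained: obtains z where "z \<in> V1" "gdist EG1 (v 1) z = depth1"
proof -
  have "depth1 \<in> gdist EG1 (v 1) ` V1"
    unfolding depth1_def using finite_V1 v1_in_V1 by (intro Max_in) auto
  then show thesis
    using that by (auto simp: image_iff)
qed

lemma depth2_attained: obtains z where "z \<in> V2" "gdist EG1 (v l) z = depth2"
proof -
  have "depth2 \<in> gdist EG1 (v l) ` V2"
    unfolding depth2_def using finite_V2 vl_in_V2 by (intro Max_in) auto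
  then show thesis
    using that by (auto simp: image_iff)
qed

lemma depth1_pos: "1 \<le> depth1"
proof -
  obtain z where z: "z \<in> V1" "z \<noteq> v 1"
    using exists_other_elem[OF card1] by blast
  have "gdist EG1 (v 1) z \<noteq> 0"
    using gdist_eq_0_imp_eq[OF reachable_G1[OF V1_VG[OF v1_in_V1] V1_VG[OF z(1)]]] z(2) by metis
  with gdist_le_depth1[OF z(1)] show ?thesis by linarith
qed

lemma VG_nonempty: "VG \<noteq> {}"
  using V1_VG[OF v1_in_V1] by auto

text \<open>In \<open>G\<^sub>1\<close> the end of the path away from the side of \<open>x\<close> is at least this far from \<open>x\<close>.\<close>

lemma gdist_G2_v1_add_path_le_ecc_G1:
  assumes x: "x \<in> V1 \<or> x \<in> V2 \<and> x \<noteq> v l"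
  shows "gdist EG2 x (v 1) + (l - 1) \<le> ecc VG EG1 x"
proof -
  have xVG: "x \<in> VG" using x V1_VG V2_VG by blast
  have collapse_x: "gdist EG2 x (collapse w) \<le> gdist EG1 x w" if "w \<in> VG" for w
    using gdist_collapse_le[OF xVG that] collapse_id[OF x] by simp
  show ?thesis
  proof (cases "x \<in> V1")
    case True
    have "gdist EG2 x (v 1) \<le> gdist EG1 x (v 1)"
      using collapse_x[OF V1_VG[OF v1_in_V1]] collapse_v1 by simp
    moreover have "gdist EG1 x (v 1) + l - 1 \<le> gdist EG1 x (v l)"
      using gdist_V1_path[OF True, of l] l_ge_2 by simp
    moreover have "gdist EG1 x (v l) \<le> ecc VG EG1 x"
      using gdist_le_ecc[OF finite_VG path_VG[of l]] l_ge_2 by simp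
    ultimately show ?thesis using l_ge_2 by linarith
  next
    case False
    then have x2: "x \<in> V2" using x by simp
    have "gdist EG2 x (v 1) \<le> gdist EG1 x (v l)"
      using collapse_x[OF path_VG[of l]] collapse_vl l_ge_2 by simp
    moreover have "gdist EG1 x (v l) + (l - 1) \<le> gdist EG1 x (v 1)"
      using gdist_V2_path[OF x2, of 1] l_ge_2 by simp
    moreover have "gdist EG1 x (v 1) \<le> ecc VG EG1 x"
      using gdist_le_ecc[OF finite_VG V1_VG[OF v1_in_V1]] .
    ultimately show ?thesis by linarith
  qed
qed

lemma ecc_G2_le_G1_off_path:
  assumes x: "x \<in> V1 \<or> x \<in> V2 \<and> x \<noteq> v l"
  shows "ecc VG EG2 x \<le> ecc VG EG1 x"
proof -
  have xVG: "x \<in> VG" using x V1_VG V2_VG by blast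
  have v1VG: "v 1 \<in> VG" using V1_VG[OF v1_in_V1] .
  obtain z where z: "z \<in> VG" "ecc VG EG2 x = gdist EG2 x z"
    using ecc_attained[OF finite_VG VG_nonempty] by blast
  from z(1) have "gdist EG2 x z \<le> ecc VG EG1 x"
  proof (cases rule: VG_cases)
    case (3 i)
    have "gdist EG2 x z \<le> gdist EG2 x (v 1) + gdist EG2 (v 1) (v i)"
      using gdist_triangle[OF reachable_G2[OF xVG v1VG] reachable_G2[OF v1VG path_VG[OF 3(1)]]] 3(2)
      by simp
    moreover have "gdist EG2 (v 1) (v i) \<le> i - 1" "i \<le> l"
      using path_gdist_G2[of 1 i] 3(1) by simp_all
    ultimately show ?thesis
      using gdist_G2_v1_add_path_le_ecc_G1[OF x] by linarith
  qed (use gdist_collapse_le[OF xVG z(1)] collapse_id x gdist_le_ecc[OF finite_VG z(1), of EG1 x]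
      in auto)
  with z show ?thesis by simp
qed

lemma ecc_G2_path_le:
  assumes i: "i \<in> {1..l}"
  shows "ecc VG EG2 (v i) \<le> max (i - 1 + max depth1 depth2) (l - i)"
proof -
  have viVG: "v i \<in> VG" using path_VG[OF i] .
  have v1VG: "v 1 \<in> VG" using V1_VG[OF v1_in_V1] .
  obtain z where z: "z \<in> VG" "ecc VG EG2 (v i) = gdist EG2 (v i) z"
    using ecc_attained[OF finite_VG VG_nonempty] by blast
  have via_v1: "gdist EG2 (v i) z \<le> i - 1 + gdist EG2 (v 1) z"
  proof -
    have "gdist EG2 (v i) (v 1) \<le> i - 1"
      using path_gdist_G2[OF i, of 1] i by (auto split: if_splits)
    then show ?thesis
      using gdist_triangle[OF reachable_G2[OF viVG v1VG] reachable_G2[OF v1VG z(1)]] by linarith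
  qed
  from z(1) have "gdist EG2 (v i) z \<le> max (i - 1 + max depth1 depth2) (l - i)"
  proof (cases rule: VG_cases)
    case 1
    have "gdist EG2 (v 1) z \<le> gdist EG1 (v 1) z"
      using gdist_collapse_le[OF v1VG z(1)] collapse_v1 collapse_id 1 by simp
    with via_v1 gdist_le_depth1[OF 1] show ?thesis by simp
  next
    case 2
    have "gdist EG2 (v 1) z \<le> gdist EG1 (v l) z"
      using gdist_collapse_le[OF path_VG[of l] z(1)] collapse_vl collapse_id 2 l_ge_2 by simp
    with via_v1 gdist_le_depth2[OF 2(1)] show ?thesis by simp
  next
    case (3 j)
    with path_gdist_G2[OF i 3(1)] i show ?thesis by (auto split: if_splits)
  qed
  with z show ?thesis by simp
qed

lemma ecc_G1_path_ge:
  assumes i: "i \<in> {1..l}"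
  shows "i - 1 + depth1 \<le> ecc VG EG1 (v i)" "l - i + depth2 \<le> ecc VG EG1 (v i)"
proof -
  have viVG: "v i \<in> VG" using path_VG[OF i] .
  obtain z1 where z1: "z1 \<in> V1" "gdist EG1 (v 1) z1 = depth1" by (rule depth1_attained)
  obtain z2 where z2: "z2 \<in> V2" "gdist EG1 (v l) z2 = depth2" by (rule depth2_attained)
  have "gdist EG1 z1 (v 1) + i - 1 \<le> gdist EG1 z1 (v i)"
    using gdist_V1_path[OF z1(1) i] .
  moreover have "gdist EG1 z1 (v 1) = depth1" "gdist EG1 z1 (v i) = gdist EG1 (v i) z1"
    using z1 gdist_sym[OF reachable_G1[OF V1_VG[OF z1(1)] V1_VG[OF v1_in_V1]]]
      gdist_sym[OF reachable_G1[OF V1_VG[OF z1(1)] viVG]] by simp_all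
  moreover have "gdist EG1 (v i) z1 \<le> ecc VG EG1 (v i)"
    using gdist_le_ecc[OF finite_VG V1_VG[OF z1(1)]] .
  ultimately show "i - 1 + depth1 \<le> ecc VG EG1 (v i)" using i by simp
  have "gdist EG1 z2 (v l) + (l - i) \<le> gdist EG1 z2 (v i)"
    using gdist_V2_path[OF z2(1) i] .
  moreover have "gdist EG1 z2 (v l) = depth2" "gdist EG1 z2 (v i) = gdist EG1 (v i) z2"
    using z2 gdist_sym[OF reachable_G1[OF V2_VG[OF z2(1)] V2_VG[OF vl_in_V2]]]
      gdist_sym[OF reachable_G1[OF V2_VG[OF z2(1)] viVG]] by simp_all
  moreover have "gdist EG1 (v i) z2 \<le> ecc VG EG1 (v i)"
    using gdist_le_ecc[OF finite_VG V2_VG[OF z2(1)]] .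
  ultimately show "l - i + depth2 \<le> ecc VG EG1 (v i)" by simp
qed

lemma ecc_G2_vl_ge: "l - 1 + max depth1 depth2 \<le> ecc VG EG2 (v l)"
proof -
  obtain z1 where z1: "z1 \<in> V1" "gdist EG1 (v 1) z1 = depth1" by (rule depth1_attained)
  obtain z2 where z2: "z2 \<in> V2" "gdist EG1 (v l) z2 = depth2" by (rule depth2_attained)
  have "depth1 + (l - 1) \<le> gdist EG2 (v l) z1"
    using gdist_G2_from_vl[of z1] z1 by simp
  also have "\<dots> \<le> ecc VG EG2 (v l)"
    using gdist_le_ecc[OF finite_VG V1_VG[OF z1(1)]] .
  finally have 1: "l - 1 + depth1 \<le> ecc VG EG2 (v l)" by simp
  have "l - 1 + depth2 \<le> ecc VG EG2 (v l)"
  proof (cases "z2 = v l")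
    case True
    with z2 1 show ?thesis by simp
  next
    case False
    have "z2 \<notin> V1" using z2(1) disjoint by auto
    with False z2 have "depth2 + (l - 1) \<le> gdist EG2 (v l) z2"
      using gdist_G2_from_vl[of z2] by simp
    also have "\<dots> \<le> ecc VG EG2 (v l)"
      using gdist_le_ecc[OF finite_VG V2_VG[OF z2(1)]] .
    finally show ?thesis by simp
  qed
  with 1 show ?thesis by simp
qed

lemma ecc_G2_pos: "x \<in> VG \<Longrightarrow> 0 < ecc VG EG2 x"
proof -
  assume x: "x \<in> VG"
  obtain z where "z \<in> VG" "z \<noteq> x"
  proof (cases "x = v 1")
    case True
    with that[of "v l"] show thesis using path_VG[of l] l_ge_2 v1_neq_vl by simp
  qed (use that[of "v 1"] V1_VG[OF v1_in_V1] in simp)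
  then show ?thesis
    using ecc_pos[OF finite_VG x _ _ reachable_G2[OF x]] by simp
qed

lemma ecc_G2_v1_less_vl: "ecc VG EG2 (v 1) < ecc VG EG2 (v l)"
  using ecc_G2_path_le[of 1] ecc_G2_vl_ge depth1_pos l_ge_2 by fastforce

section \<open>Degrees\<close>

lemma finite_nbrs_G1: "finite (nbrs EG1 x)"
  by (rule finite_subset[OF _ finite_VG]) (auto simp: nbrs_def dest: EG1_VG)

lemma v1_not_adjacent_N: "y \<in> N \<Longrightarrow> {v 1, y} \<notin> EG1"
proof
  assume y: "y \<in> N" and e: "{v 1, y} \<in> EG1"
  have yV2: "y \<in> V2" "y \<noteq> v l" using N_V2[OF y] by auto
  consider "{v 1, y} \<in> E1" | "{v 1, y} \<in> E2" | "{v 1, y} \<in> EP"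
    using e unfolding EG1_def by blast
  then show False
  proof cases
    case 1
    then show False using E1_edge[OF 1] yV2 disjoint by blast
  next
    case 2
    then show False using E2_edge[OF 2] v1_in_V1 disjoint by blast
  next
    case 3
    then obtain k where "1 \<le> k" "k < l" "v 1 = v k \<and> y = v (Suc k) \<or> v 1 = v (Suc k) \<and> y = v k"
      by (rule EP_edgeE)
    then have "y = v k \<and> k \<in> {1..l} \<or> y = v (Suc k) \<and> Suc k \<in> {1..l}" by auto
    with \<open>k < l\<close> show False using path_in_V2_iff yV2 by auto
  qed
qed

lemma degree_G2_eq_G1:
  assumes x: "x \<in> VG" "x \<noteq> v 1" "x \<noteq> v l"
  shows "degree EG2 x = degree EG1 x"
proof (cases "x \<in> N")
  case False
  then have "nbrs EG2 x = nbrs EG1 x"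
    unfolding nbrs_def using x by (auto simp: EG2_iff)
  then show ?thesis unfolding degree_def by simp
next
  case True
  have vl: "v l \<in> nbrs EG1 x"
    using True unfolding N_iff nbrs_def EG1_def by (simp add: insert_commute)
  have v1: "v 1 \<notin> nbrs EG1 x"
    using v1_not_adjacent_N[OF True] unfolding nbrs_def by (simp add: insert_commute)
  have "nbrs EG2 x = insert (v 1) (nbrs EG1 x - {v l})"
    unfolding nbrs_def using x True by (auto simp: EG2_iff)
  then have "card (nbrs EG2 x) = Suc (card (nbrs EG1 x - {v l}))"
    using v1 finite_nbrs_G1 by (simp del: card_Diff_insert)
  also have "\<dots> = card (nbrs EG1 x)"
    by (rule card_Suc_Diff1[OF finite_nbrs_G1 vl])
  finally show ?thesis unfolding degree_def .
qed

lemma degree_G2_v1: "degree EG2 (v 1) = degree EG1 (v 1) + card N"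
proof -
  have "nbrs EG2 (v 1) = nbrs EG1 (v 1) \<union> N"
    unfolding nbrs_def using v1_neq_vl N_V2 v1_in_V1 disjoint by (auto simp: EG2_iff)
  moreover have "nbrs EG1 (v 1) \<inter> N = {}"
    using v1_not_adjacent_N unfolding nbrs_def by blast
  ultimately show ?thesis
    unfolding degree_def using finite_nbrs_G1 finite_N by (simp add: card_Un_disjoint)
qed

lemma nbrs_G1_vl: "nbrs EG1 (v l) = insert (v (l - 1)) N"
proof -
  have "{v l, y} \<in> EG1 \<longleftrightarrow> y \<in> N \<or> y = v (l - 1)" for y
  proof
    assume e: "{v l, y} \<in> EG1"
    consider "{v l, y} \<in> E1" | "{v l, y} \<in> E2" | "{v l, y} \<in> EP"
      using e unfolding EG1_def by blast
    then show "y \<in> N \<or> y = v (l - 1)"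
    proof cases
      case 1
      then show ?thesis using E1_edge[OF 1] vl_in_V2 disjoint by blast
    next
      case 2
      then show ?thesis using N_iff by simp
    next
      case 3
      then obtain k where k: "1 \<le> k" "k < l" "v l = v k \<and> y = v (Suc k) \<or> v l = v (Suc k) \<and> y = v k"
        by (rule EP_edgeE)
      then have "Suc k = l" "y = v k"
        using path_eq_iff[of l k] path_eq_iff[of l "Suc k"] l_ge_2 by auto
      then show ?thesis by auto
    qed
  next
    assume "y \<in> N \<or> y = v (l - 1)"
    moreover have "{v l, v (l - 1)} \<in> EP"
      using path_edge_EP[of "l - 1"] l_ge_2 by (simp add: insert_commute)
    ultimately show "{v l, y} \<in> EG1"
      unfolding N_iff EG1_def by blast
  qed
  then show ?thesis unfolding nbrs_def by auto
qed

lemma v_l_minus_1: "l - 1 \<in> {1..l}" "v (l - 1) \<noteq> v l" "v (l - 1) \<notin> N"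
proof -
  show l1: "l - 1 \<in> {1..l}" using l_ge_2 by simp
  show "v (l - 1) \<noteq> v l" using path_eq_iff[OF l1, of l] l_ge_2 by simp
  have "v (l - 1) \<notin> V2" using path_in_V2_iff[OF l1] l_ge_2 by simp
  then show "v (l - 1) \<notin> N" using N_V2 by blast
qed

lemma degree_G1_vl: "degree EG1 (v l) = card N + 1"
  unfolding degree_def nbrs_G1_vl using v_l_minus_1 finite_N by simp

lemma degree_G2_vl: "degree EG2 (v l) = 1"
proof -
  have "nbrs EG2 (v l) = {v (l - 1)}"
    using nbrs_G1_vl v_l_minus_1 N_V2 v1_neq_vl unfolding nbrs_def
    by (auto simp: EG2_iff)
  then show ?thesis unfolding degree_def by simp
qed

lemma degree_G1_interior:
  assumes i: "i \<in> {2..<l}"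
  shows "degree EG1 (v i) = 2"
proof -
  have i1: "i \<in> {1..l}" "i - 1 \<in> {1..l}" "Suc i \<in> {1..l}" using i by auto
  have new: "v i \<notin> V1" "v i \<notin> V2" using interior_new i by auto
  have "{v i, y} \<in> EG1 \<longleftrightarrow> y = v (i - 1) \<or> y = v (Suc i)" for y
  proof
    assume e: "{v i, y} \<in> EG1"
    consider "{v i, y} \<in> E1" | "{v i, y} \<in> E2" | "{v i, y} \<in> EP"
      using e unfolding EG1_def by blast
    then show "y = v (i - 1) \<or> y = v (Suc i)"
    proof cases
      case 3
      then obtain k where k: "1 \<le> k" "k < l" "v i = v k \<and> y = v (Suc k) \<or> v i = v (Suc k) \<and> y = v k"
        by (rule EP_edgeE)
      then have "i = k \<and> y = v (Suc k) \<or> i = Suc k \<and> y = v k"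
        using path_eq_iff[OF i1(1), of k] path_eq_iff[OF i1(1), of "Suc k"] by auto
      then show ?thesis by auto
    qed (use E1_edge new E2_edge new in auto)
  next
    have "{v i, v (i - 1)} \<in> EP" "{v i, v (Suc i)} \<in> EP"
      using path_edge_EP[of "i - 1"] path_edge_EP[of i] i by (auto simp: insert_commute)
    then show "y = v (i - 1) \<or> y = v (Suc i) \<Longrightarrow> {v i, y} \<in> EG1"
      unfolding EG1_def by blast
  qed
  then have "nbrs EG1 (v i) = {v (i - 1), v (Suc i)}"
    unfolding nbrs_def by auto
  moreover have "v (i - 1) \<noteq> v (Suc i)"
    using path_eq_iff[OF i1(2,3)] by simp
  ultimately show ?thesis unfolding degree_def by simp
qed

lemma degree_G1_v1_ge_2: "2 \<le> degree EG1 (v 1)"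
proof -
  obtain y where y: "{v 1, y} \<in> E1"
    using connected_graph_has_edge[OF connected1 card1 v1_in_V1] by blast
  have "y \<noteq> v 2"
    using E1_edge[OF y] path_in_V1_iff[of 2] l_ge_2 by auto
  moreover have "{y, v 2} \<subseteq> nbrs EG1 (v 1)"
    using y path_edge_EP[of 1] l_ge_2 unfolding nbrs_def EG1_def by (simp add: numeral_2_eq_2)
  then have "card {y, v 2} \<le> degree EG1 (v 1)"
    unfolding degree_def by (rule card_mono[OF finite_nbrs_G1])
  ultimately show ?thesis by simp
qed

section \<open>Comparing the two sums\<close>

definition "contrib1 x = real (degree EG1 x) / real (ecc VG EG1 x)"
definition "contrib2 x = real (degree EG2 x) / real (ecc VG EG2 x)"

lemma contrib_le:
  assumes "x \<in> VG" "degree EG1 y \<le> degree EG2 x" "ecc VG EG2 x \<le> ecc VG EG1 y"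
  shows "contrib1 y \<le> contrib2 x"
  unfolding contrib1_def contrib2_def using ecc_G2_pos[OF assms(1)] assms(2,3)
  by (intro frac_le) auto

lemma contrib_le_off_path:
  assumes "x \<in> VG" "x \<notin> v ` {1..l}"
  shows "contrib1 x \<le> contrib2 x"
proof (rule contrib_le[OF assms(1)])
  have "x \<noteq> v 1" "x \<noteq> v l" using assms(2) l_ge_2 by auto
  then show "degree EG1 x \<le> degree EG2 x" using degree_G2_eq_G1[OF assms(1)] by simp
  have "x \<in> V1 \<or> x \<in> V2 \<and> x \<noteq> v l"
    using assms by (cases rule: VG_cases) auto
  then show "ecc VG EG2 x \<le> ecc VG EG1 x" by (rule ecc_G2_le_G1_off_path)
qed

lemma contrib_ends:
  "contrib1 (v 1) = real (degree EG1 (v 1)) / real (ecc VG EG1 (v 1))"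
  "contrib1 (v l) = (real (card N) + 1) / real (ecc VG EG1 (v l))"
  "contrib2 (v 1) = (real (degree EG1 (v 1)) + real (card N)) / real (ecc VG EG2 (v 1))"
  "contrib2 (v l) = 1 / real (ecc VG EG2 (v l))"
  unfolding contrib1_def contrib2_def degree_G2_v1 degree_G1_vl degree_G2_vl by simp_all

lemma card_N_ge_1: "1 \<le> real (card N)"
  using N_nonempty finite_N by (simp add: Suc_leI card_gt_0_iff)

lemma contrib_le_interior_aligned:
  assumes "depth2 \<le> depth1" "x \<in> VG - {v 1, v l}"
  shows "contrib1 x \<le> contrib2 x"
proof (cases "x \<in> v ` {1..l}")
  case True
  then obtain i where i: "i \<in> {1..l}" "x = v i" by blast
  show ?thesis
  proof (rule contrib_le)
    show "degree EG1 x \<le> degree EG2 x" using degree_G2_eq_G1 assms(2) by simp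
    show "ecc VG EG2 x \<le> ecc VG EG1 x"
      using ecc_G2_path_le[OF i(1)] ecc_G1_path_ge[OF i(1)] i(2) assms(1) by simp
  qed (use assms(2) in simp)
qed (use contrib_le_off_path assms(2) in simp)

lemma contrib_ends_aligned:
  assumes "depth2 \<le> depth1"
  shows "contrib1 (v 1) + contrib1 (v l) < contrib2 (v 1) + contrib2 (v l)"
  unfolding contrib_ends
proof (rule ratio_sum_less_aligned)
  show "real (ecc VG EG2 (v 1)) \<le> real (ecc VG EG1 (v 1))"
    using ecc_G2_path_le[of 1] ecc_G1_path_ge[of 1] assms l_ge_2 by simp
  show "real (ecc VG EG2 (v l)) \<le> real (ecc VG EG1 (v l))"
    using ecc_G2_path_le[of l] ecc_G1_path_ge[of l] assms l_ge_2 by simp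
qed (use ecc_G2_pos[OF V1_VG[OF v1_in_V1]] ecc_G2_v1_less_vl card_N_ge_1 in auto)

text \<open>If \<open>H\<^sub>2\<close> is the deeper side, \<open>v i\<close> is in \<open>G\<^sub>2\<close> at most as eccentric as \<open>v (l + 1 - i)\<close> in
  \<open>G\<^sub>1\<close>, so the path vertices are matched in reverse order.\<close>

definition "reverse_path w = (if w \<in> v ` {1..l} then v (l + 1 - path_index w) else w)"

lemma reverse_path_v: "i \<in> {1..l} \<Longrightarrow> reverse_path (v i) = v (l + 1 - i)"
  unfolding reverse_path_def using path_index_v by simp

lemma reverse_path_involution: "reverse_path (reverse_path w) = w"
proof (cases "w \<in> v ` {1..l}")
  case True
  then obtain i where i: "i \<in> {1..l}" "w = v i" by blast
  then have "l + 1 - i \<in> {1..l}" by auto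
  with i show ?thesis by (simp add: reverse_path_v)
qed (simp add: reverse_path_def)

lemma bij_betw_reverse_path: "bij_betw reverse_path VG VG"
proof (rule bij_betw_byWitness[where f' = reverse_path])
  show "reverse_path ` VG \<subseteq> VG"
  proof
    fix y assume "y \<in> reverse_path ` VG"
    then obtain w where w: "w \<in> VG" "y = reverse_path w" by blast
    show "y \<in> VG"
    proof (cases "w \<in> v ` {1..l}")
      case True
      then obtain i where i: "i \<in> {1..l}" "w = v i" by blast
      then have "l + 1 - i \<in> {1..l}" by auto
      with w i show ?thesis using reverse_path_v path_VG by simp
    qed (use w in \<open>simp add: reverse_path_def\<close>)
  qed
  then show "reverse_path ` VG \<subseteq> VG" .
qed (simp_all add: reverse_path_involution)

lemma contrib_le_interior_reversed:
  assumes "depth1 < depth2" "x \<in> VG - {v 1, v l}"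
  shows "contrib1 (reverse_path x) \<le> contrib2 x"
proof (cases "x \<in> v ` {1..l}")
  case True
  then obtain i where i: "i \<in> {1..l}" "x = v i" by blast
  with assms(2) have "i \<noteq> 1" "i \<noteq> l" by auto
  with i(1) have int: "i \<in> {2..<l}" by auto
  then have int': "l + 1 - i \<in> {2..<l}" and j: "l + 1 - i \<in> {1..l}" by auto
  show ?thesis
  proof (rule contrib_le)
    show "degree EG1 (reverse_path x) \<le> degree EG2 x"
      using degree_G2_eq_G1 assms(2) degree_G1_interior[OF int] degree_G1_interior[OF int']
        reverse_path_v[OF i(1)] i(2) by simp
    show "ecc VG EG2 x \<le> ecc VG EG1 (reverse_path x)"
      using ecc_G2_path_le[OF i(1)] ecc_G1_path_ge[OF j] reverse_path_v[OF i(1)] i assms(1) int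
      by auto
  qed (use assms(2) in simp)
qed (use contrib_le_off_path assms(2) in \<open>simp add: reverse_path_def\<close>)

lemma contrib_ends_reversed:
  assumes "depth1 < depth2"
  shows "contrib1 (reverse_path (v 1)) + contrib1 (reverse_path (v l))
    < contrib2 (v 1) + contrib2 (v l)"
proof -
  have "reverse_path (v 1) = v l" "reverse_path (v l) = v 1"
    using reverse_path_v[of 1] reverse_path_v[of l] l_ge_2 by auto
  moreover have "contrib1 (v l) + contrib1 (v 1) < contrib2 (v 1) + contrib2 (v l)"
    unfolding contrib_ends
  proof (rule ratio_sum_less_crossed)
    show "real (ecc VG EG2 (v 1)) \<le> real (ecc VG EG1 (v l))"
      using ecc_G2_path_le[of 1] ecc_G1_path_ge[of l] assms l_ge_2 by simp
    show "real (ecc VG EG2 (v l)) \<le> real (ecc VG EG1 (v 1))"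
      using ecc_G2_path_le[of l] ecc_G1_path_ge[of 1] assms l_ge_2 by simp
    show "2 \<le> real (degree EG1 (v 1))"
      using degree_G1_v1_ge_2 by simp
  qed (use ecc_G2_pos[OF V1_VG[OF v1_in_V1]] ecc_G2_v1_less_vl in auto)
  ultimately show ?thesis by simp
qed

lemma xi_ee_less: "xi_ee VG EG1 < xi_ee VG EG2"
proof -
  have "sum contrib1 VG < sum contrib2 VG"
  proof (cases "depth2 \<le> depth1")
    case True
    with contrib_le_interior_aligned contrib_ends_aligned show ?thesis
      by (intro sum_less_sum_bij_betw[OF finite_VG V1_VG[OF v1_in_V1] path_VG[of l] v1_neq_vl
            bij_betw_id]) (use l_ge_2 in auto)
  next
    case False
    with contrib_le_interior_reversed contrib_ends_reversed show ?thesis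
      by (intro sum_less_sum_bij_betw[OF finite_VG V1_VG[OF v1_in_V1] path_VG[of l] v1_neq_vl
            bij_betw_reverse_path]) (use l_ge_2 in auto)
  qed
  then show ?thesis
    unfolding xi_ee_def contrib1_def contrib2_def .
qed

end

theorem theorem3p3:
  fixes V1 V2 :: "'a set" and E1 E2 :: "'a set set" and v :: "nat \<Rightarrow> 'a" and l :: nat
  assumes "simple_graph V1 E1" "connected_graph V1 E1" "card V1 \<ge> 2"
    and "simple_graph V2 E2" "connected_graph V2 E2" "card V2 \<ge> 2"
    and "V1 \<inter> V2 = {}"
    and "l \<ge> 2"
    and "v 1 \<in> V1" "v l \<in> V2"
    and "inj_on v {1..l}"
    and "\<forall>i\<in>{2..<l}. v i \<notin> V1 \<union> V2"
  shows "let VG = V1 \<union> V2 \<union> v ` {1..l};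
             E_G1 = E1 \<union> E2 \<union> {{v i, v (Suc i)} | i. 1 \<le> i \<and> i < l};
             N = nbrs E2 (v l);
             E_G2 = (E_G1 - {{v l, x} | x. x \<in> N}) \<union> {{v 1, x} | x. x \<in> N}
         in xi_ee VG E_G1 < xi_ee VG E_G2"
proof -
  interpret path_joined_graphs V1 V2 E1 E2 v l
    using assms by unfold_locales auto
  show ?thesis
    using xi_ee_less unfolding Let_def VG_def EG1_def EG2_def EP_def N_def .
qed

end
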